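(* Let $n\ge2$, $\mathbb{K}$ any field, $A_n=\mathbb{K}[x,y]/(y^{2n+3},\, x^ny^2-y^{n+2},\, x^{2n+1}-xy^{n+1})$, and let $B_n$ be the set of monomials $x^iy^j$ not divisible by any of $y^{2n+3}, xy^{n+3}, x^ny^2, x^{2n+1}$. For every monomial $x^iy^j\in\mathbb{K}[x,y]$ exactly one of the following holds: (1) $x^iy^j=0$ in $A_n$; this happens if and only if $x^iy^j$ is divisible by one of $y^{2n+3}, xy^{n+3}, x^{n+1}y^3, x^{2n+1}y^2, x^{3n+1}$; (2) $x^iy^j\in B_n$; (3) $x^iy^j\notin B_n$ and there is a unique monomial $x^{i'}y^{j'}\in B_n$ with $x^iy^j=x^{i'}y^{j'}$ in $A_n$; moreover, $x^iy^j$ and $x^{i'}y^{j'}$ occur in the same one of the relations (1)–(7) listed below. The relations are: (1) $y^{n+2}=x^ny^2$; (2) $y^{n+k+2}=x^ny^{k+2}$ for $1\le k\le n-2$; (3) $y^{2n+1}=x^ny^{n+1}=x^{3n}$; (4) $y^{2n+2}=x^ny^{n+2}=x^{2n}y^2=x^{3n}y$; (5) $x^ky^{n+2}=x^{n+k}y^2=x^{2n+k}y$ for $1\le k\le n-1$; (6) $xy^{n+1}=x^{2n+1}$; (7) $x^ky^{n+1}=x^{2n+k}$ for $2\le k\le n-1$ (each displayed chain with a fixed $k$ counts as one relation).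
   Context: It is a fact (shown in the paper) that the images of the monomials in $B_n$ form a basis of $A_n$ and that relations (1)–(7) hold in $A_n$; each monomial appearing in (1)–(7) occurs in exactly one of these relations. *)

theory Defs
  imports Main "HOL-Library.Poly_Mapping" "HOL-Library.Product_Plus"
begin

text \<open>Bivariate polynomials K[x,y]: finitely supported maps from exponent pairs (i,j)
  (standing for x^i y^j) to coefficients, with convolution product.\<close>
type_synonym 'k poly2 = "(nat \<times> nat) \<Rightarrow>\<^sub>0 'k"

definition mon :: "nat \<Rightarrow> nat \<Rightarrow> 'k::field poly2" where
  "mon i j = Poly_Mapping.single (i, j) 1"

definition idealA :: "nat \<Rightarrow> 'k::field poly2 set" where
  "idealA n = {a * mon 0 (2*n+3) + b * (mon n 2 - mon 0 (n+2)) + c * (mon (2*n+1) 0 - mon 1 (n+1))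
               | a b c. True}"

definition eqA :: "nat \<Rightarrow> 'k::field poly2 \<Rightarrow> 'k poly2 \<Rightarrow> bool" where
  "eqA n p q \<longleftrightarrow> p - q \<in> idealA n"

definition inB :: "nat \<Rightarrow> nat \<Rightarrow> nat \<Rightarrow> bool" where
  "inB n i j \<longleftrightarrow> \<not> (j \<ge> 2*n+3 \<or> (i \<ge> 1 \<and> j \<ge> n+3) \<or> (i \<ge> n \<and> j \<ge> 2) \<or> i \<ge> 2*n+1)"

definition zero_div :: "nat \<Rightarrow> nat \<Rightarrow> nat \<Rightarrow> bool" where
  "zero_div n i j \<longleftrightarrow> j \<ge> 2*n+3 \<or> (i \<ge> 1 \<and> j \<ge> n+3) \<or> (i \<ge> n+1 \<and> j \<ge> 3)
      \<or> (i \<ge> 2*n+1 \<and> j \<ge> 2) \<or> i \<ge> 3*n+1"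

text \<open>The relations (1)-(7); each relation (for fixed k) is the set of exponent pairs
  of the monomials occurring in it.\<close>
definition relations :: "nat \<Rightarrow> (nat \<times> nat) set set" where
  "relations n =
     {{(0, n+2), (n, 2)}}
   \<union> {{(0, n+k+2), (n, k+2)} | k. 1 \<le> k \<and> k \<le> n - 2}
   \<union> {{(0, 2*n+1), (n, n+1), (3*n, 0)}}
   \<union> {{(0, 2*n+2), (n, n+2), (2*n, 2), (3*n, 1)}}
   \<union> {{(k, n+2), (n+k, 2), (2*n+k, 1)} | k. 1 \<le> k \<and> k \<le> n - 1}
   \<union> {{(1, n+1), (2*n+1, 0)}}
   \<union> {{(k, n+1), (2*n+k, 0)} | k. 2 \<le> k \<and> k \<le> n - 1}"

end

theory Submission
  imports Defs
begin

text \<open>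
  Read the generators of the ideal as rewriting rules on monomials:
  x^n y^2 \<rightarrow> y^(n+2), x^(2n+1) \<rightarrow> x y^(n+1) and y^(2n+3) \<rightarrow> 0.
  An explicit map nf sends every monomial either to a monomial of B_n or to
  "zero", and it is invariant under each rule multiplied by any monomial.
  Hence every monomial is congruent to its normal form, and for each b in B_n
  the linear functional "coefficient of b in the normal form" vanishes on the
  ideal. These functionals separate the monomials of B_n modulo the ideal,
  which yields uniqueness of the representative and shows that monomials with
  a normal form are nonzero in A_n. The remaining monomials, those divisible by
  one of the five listed monomials, are carried to a multiple of y^(2n+3) by
  the relations used in both directions.
\<close>

lemma mon_mult: "(mon i j :: 'k::field poly2) * mon k l = mon (i + k) (j + l)"
  unfolding mon_def by (simp add: mult_single)

lemma idealA_memI: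
  "p = a * mon 0 (2*n+3) + b * (mon n 2 - mon 0 (n+2)) + c * (mon (2*n+1) 0 - mon 1 (n+1))
    \<Longrightarrow> p \<in> idealA n"
  unfolding idealA_def by blast

lemma idealA_add:
  assumes "p \<in> idealA n" "q \<in> idealA n"
  shows "p + q \<in> idealA n"
proof -
  obtain a b c a' b' c' where p:
    "p = a * mon 0 (2*n+3) + b * (mon n 2 - mon 0 (n+2)) + c * (mon (2*n+1) 0 - mon 1 (n+1))"
    and q: "q = a' * mon 0 (2*n+3) + b' * (mon n 2 - mon 0 (n+2)) + c' * (mon (2*n+1) 0 - mon 1 (n+1))"
    using assms unfolding idealA_def by blast
  show ?thesis
    by (rule idealA_memI[where a = "a + a'" and b = "b + b'" and c = "c + c'"]) (simp add: p q algebra_simps)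
qed

lemma idealA_mult_left:
  assumes "q \<in> idealA n"
  shows "r * q \<in> idealA n"
proof -
  obtain a b c where q:
    "q = a * mon 0 (2*n+3) + b * (mon n 2 - mon 0 (n+2)) + c * (mon (2*n+1) 0 - mon 1 (n+1))"
    using assms unfolding idealA_def by blast
  show ?thesis
    by (rule idealA_memI[where a = "r * a" and b = "r * b" and c = "r * c"]) (simp add: q algebra_simps)
qed

lemma eqA_refl: "eqA n p p"
  unfolding eqA_def by (rule idealA_memI[where a = 0 and b = 0 and c = 0]) simp

lemma eqA_sym: "eqA n p q \<Longrightarrow> eqA n q p"
  unfolding eqA_def using idealA_mult_left[of "p - q" n "-1"] by simp

lemma eqA_trans [trans]: "eqA n p q \<Longrightarrow> eqA n q r \<Longrightarrow> eqA n p r"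
  unfolding eqA_def using idealA_add by fastforce

lemma eqA_mult_left: "eqA n p q \<Longrightarrow> eqA n (r * p) (r * q)"
  unfolding eqA_def using idealA_mult_left by (fastforce simp: right_diff_distrib)

lemma eqA_mon_shift:
  assumes "eqA n (mon i j :: 'k::field poly2) (mon k l)"
  shows "eqA n (mon (u + i) (v + j) :: 'k poly2) (mon (u + k) (v + l))"
  using eqA_mult_left[OF assms, of "mon u v"] by (simp add: mon_mult)

lemma eqA_generators:
  "eqA n (mon 0 (2*n+3) :: 'k::field poly2) 0"
  "eqA n (mon n 2 :: 'k::field poly2) (mon 0 (n+2))"
  "eqA n (mon (2*n+1) 0 :: 'k::field poly2) (mon 1 (n+1))"
  unfolding eqA_def
proof -
  show "mon 0 (2*n+3) - 0 \<in> idealA n"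
    by (rule idealA_memI[where a = 1 and b = 0 and c = 0]) simp
  show "mon n 2 - mon 0 (n+2) \<in> idealA n"
    by (rule idealA_memI[where a = 0 and b = 1 and c = 0]) simp
  show "mon (2*n+1) 0 - mon 1 (n+1) \<in> idealA n"
    by (rule idealA_memI[where a = 0 and b = 0 and c = 1]) simp
qed

lemma eqA_xn_y2:
  assumes "n \<le> i" "2 \<le> j"
  shows "eqA n (mon i j :: 'k::field poly2) (mon (i - n) (j + n))"
proof -
  obtain a b where "i = n + a" "j = 2 + b"
    using assms by (metis le_add_diff_inverse)
  then show ?thesis
    using eqA_mon_shift[OF eqA_generators(2), of n a b] by (simp add: add_ac)
qed

lemma eqA_x2n1:
  assumes "2*n + 1 \<le> i"
  shows "eqA n (mon i j :: 'k::field poly2) (mon (i - 2*n) (j + n + 1))"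
proof -
  obtain a where "i = 2*n + 1 + a"
    using assms by (metis le_add_diff_inverse)
  then show ?thesis
    using eqA_mon_shift[OF eqA_generators(3), of n a j] by (simp add: add_ac)
qed

lemma eqA_x_yn1:
  assumes "1 \<le> i" "n + 1 \<le> j"
  shows "eqA n (mon i j :: 'k::field poly2) (mon (i + 2*n) (j - n - 1))"
proof -
  obtain a b where "i = 1 + a" "j = n + 1 + b"
    using assms by (metis le_add_diff_inverse)
  then show ?thesis
    using eqA_sym[OF eqA_mon_shift[OF eqA_generators(3), of n a b]] by (simp add: add_ac)
qed

lemma mon_eqA_zero_y2n3:
  "2*n + 3 \<le> j \<Longrightarrow> eqA n (mon i j :: 'k::field poly2) 0"
  using eqA_mult_left[OF eqA_generators(1), of n "mon i (j - (2*n+3))"] by (simp add: mon_mult)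

lemma mon_eqA_zero_x_y2n2:
  assumes "n \<ge> 2" "1 \<le> i" "2*n + 2 \<le> j"
  shows "eqA n (mon i j :: 'k::field poly2) 0"
proof -
  have "eqA n (mon i j :: 'k poly2) (mon (i + 2*n) (j - n - 1))"
    using assms by (intro eqA_x_yn1) auto
  also have "eqA n \<dots> (mon (i + 2*n - n) (j - n - 1 + n))"
    using assms by (intro eqA_xn_y2) auto
  also have "eqA n \<dots> (mon (i + 2*n - n - n) (j - n - 1 + n + n))"
    using assms by (intro eqA_xn_y2) auto
  also have "eqA n \<dots> 0"
    using assms by (intro mon_eqA_zero_y2n3) auto
  finally show ?thesis .
qed

lemma mon_eqA_zero_xn1_yn2:
  assumes "n \<ge> 2" "n + 1 \<le> i" "n + 2 \<le> j"
  shows "eqA n (mon i j :: 'k::field poly2) 0"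
proof -
  have "eqA n (mon i j :: 'k poly2) (mon (i - n) (j + n))"
    using assms by (intro eqA_xn_y2) auto
  also have "eqA n \<dots> 0"
    using assms by (intro mon_eqA_zero_x_y2n2) auto
  finally show ?thesis .
qed

lemma mon_eqA_zero_x2n1_y2:
  assumes "n \<ge> 2" "2*n + 1 \<le> i" "2 \<le> j"
  shows "eqA n (mon i j :: 'k::field poly2) 0"
proof -
  have "eqA n (mon i j :: 'k poly2) (mon (i - n) (j + n))"
    using assms by (intro eqA_xn_y2) auto
  also have "eqA n \<dots> 0"
    using assms by (intro mon_eqA_zero_xn1_yn2) auto
  finally show ?thesis .
qed

lemma mon_eqA_zero_x_yn3:
  assumes "n \<ge> 2" "1 \<le> i" "n + 3 \<le> j"
  shows "eqA n (mon i j :: 'k::field poly2) 0"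
proof -
  have "eqA n (mon i j :: 'k poly2) (mon (i + 2*n) (j - n - 1))"
    using assms by (intro eqA_x_yn1) auto
  also have "eqA n \<dots> 0"
    using assms by (intro mon_eqA_zero_x2n1_y2) auto
  finally show ?thesis .
qed

lemma mon_eqA_zero_xn1_y3:
  assumes "n \<ge> 2" "n + 1 \<le> i" "3 \<le> j"
  shows "eqA n (mon i j :: 'k::field poly2) 0"
proof -
  have "eqA n (mon i j :: 'k poly2) (mon (i - n) (j + n))"
    using assms by (intro eqA_xn_y2) auto
  also have "eqA n \<dots> 0"
    using assms by (intro mon_eqA_zero_x_yn3) auto
  finally show ?thesis .
qed

lemma mon_eqA_zero_x3n1:
  assumes "n \<ge> 2" "3*n + 1 \<le> i"
  shows "eqA n (mon i j :: 'k::field poly2) 0"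
proof -
  have "eqA n (mon i j :: 'k poly2) (mon (i - 2*n) (j + n + 1))"
    using assms by (intro eqA_x2n1) auto
  also have "eqA n \<dots> 0"
    using assms by (intro mon_eqA_zero_xn1_y3) auto
  finally show ?thesis .
qed

lemma mon_eqA_zero_if_zero_div:
  "n \<ge> 2 \<Longrightarrow> zero_div n i j \<Longrightarrow> eqA n (mon i j :: 'k::field poly2) 0"
  unfolding zero_div_def
  using mon_eqA_zero_y2n3 mon_eqA_zero_x_yn3 mon_eqA_zero_xn1_y3 mon_eqA_zero_x2n1_y2 mon_eqA_zero_x3n1
  by (elim disjE conjE) auto

text \<open>
  The exponents of the monomial of B_n that equals x^i y^j in A_n, or None when
  x^i y^j = 0 in A_n.
\<close>
definition nf :: "nat \<Rightarrow> nat \<Rightarrow> nat \<Rightarrow> (nat \<times> nat) option" where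
  "nf n i j =
     (if zero_div n i j then None
      else if inB n i j then Some (i, j)
      else if i = n then Some (0, n + j)
      else if j = 2 then Some (if i < 2*n then (i - n, n + 2) else (0, 2*n + 2))
      else if i < 3*n then Some (i - 2*n, j + n + 1)
      else Some (0, j + 2*n + 1))"

lemma nf_eq_None_iff: "nf n i j = None \<longleftrightarrow> zero_div n i j"
  unfolding nf_def by auto

lemma nf_inB: "inB n i j \<Longrightarrow> nf n i j = Some (i, j)"
  unfolding nf_def zero_div_def inB_def by auto

lemma inB_nf: "n \<ge> 2 \<Longrightarrow> nf n i j = Some (a, b) \<Longrightarrow> inB n a b"
  unfolding nf_def zero_div_def inB_def by (auto split: if_splits)

lemma nf_bound: "nf n i j = Some t \<Longrightarrow> i \<le> 3*n \<and> j \<le> 2*n + 2"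
  unfolding nf_def zero_div_def inB_def by (auto split: if_splits)

lemma nf_xn_y2: "n \<ge> 2 \<Longrightarrow> n \<le> i \<Longrightarrow> 2 \<le> j \<Longrightarrow> nf n i j = nf n (i - n) (j + n)"
  unfolding nf_def zero_div_def inB_def by auto

lemma nf_x2n1: "n \<ge> 2 \<Longrightarrow> 2*n + 1 \<le> i \<Longrightarrow> nf n i j = nf n (i - 2*n) (j + n + 1)"
  unfolding nf_def zero_div_def inB_def by auto

lemma nf_y2n3: "2*n + 3 \<le> j \<Longrightarrow> nf n i j = None"
  unfolding nf_def zero_div_def by auto

lemma mon_eqA_nf:
  assumes "n \<ge> 2" "nf n i j = Some (a, b)"
  shows "eqA n (mon i j :: 'k::field poly2) (mon a b)"
  using assms(2)
proof (induction i arbitrary: j rule: less_induct)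
  case (less i)
  have "\<not> zero_div n i j"
    using less.prems by (simp flip: nf_eq_None_iff)
  then consider "inB n i j" | "2*n + 1 \<le> i" | "n \<le> i" "2 \<le> j"
    unfolding inB_def zero_div_def by linarith
  then show ?case
  proof cases
    case 1
    then have "(a, b) = (i, j)"
      using less.prems by (simp add: nf_inB)
    then show ?thesis
      by (simp add: eqA_refl)
  next
    case 2
    have "eqA n (mon i j :: 'k poly2) (mon (i - 2*n) (j + n + 1))"
      using 2 by (rule eqA_x2n1)
    also have "eqA n \<dots> (mon a b)"
    proof (rule less.IH)
      show "nf n (i - 2*n) (j + n + 1) = Some (a, b)"
        using nf_x2n1[OF assms(1) 2, of j] less.prems by simp
    qed (use 2 assms(1) in linarith)
    finally show ?thesis .
  next
    case 3
    have "eqA n (mon i j :: 'k poly2) (mon (i - n) (j + n))"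
      using 3 by (rule eqA_xn_y2)
    also have "eqA n \<dots> (mon a b)"
    proof (rule less.IH)
      show "nf n (i - n) (j + n) = Some (a, b)"
        using nf_xn_y2[OF assms(1) 3] less.prems by simp
    qed (use 3 assms(1) in linarith)
    finally show ?thesis .
  qed
qed

lemma update_eq_add_single:
  "k \<notin> Poly_Mapping.keys f \<Longrightarrow> Poly_Mapping.update k b f = f + Poly_Mapping.single k b"
  by (rule poly_mapping_eqI) (auto simp: lookup_update lookup_add lookup_single when_def in_keys_iff)

lemma additive_vanishes_on_multiples:
  fixes \<phi> :: "('a::monoid_add \<Rightarrow>\<^sub>0 'b::semiring_0) \<Rightarrow> 'c::comm_monoid_add"
  assumes add: "\<And>p q. \<phi> (p + q) = \<phi> p + \<phi> q"
    and single: "\<And>m c. \<phi> (Poly_Mapping.single m c * g) = 0"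
  shows "\<phi> (a * g) = 0"
proof (induction a rule: update_induct)
  case const
  show ?case
    using single[of _ 0] by simp
next
  case (update f k b)
  then show ?case
    by (simp add: update_eq_add_single distrib_right add single)
qed

definition nf_coeff :: "nat \<Rightarrow> nat \<times> nat \<Rightarrow> 'k::field poly2 \<Rightarrow> 'k" where
  "nf_coeff n t p = (\<Sum>m \<in> {(i, j). nf n i j = Some t}. Poly_Mapping.lookup p m)"

lemma finite_nf_fibre: "finite {(i, j). nf n i j = Some t}"
proof (rule finite_subset)
  show "{(i, j). nf n i j = Some t} \<subseteq> {0..3*n} \<times> {0..2*n + 2}"
    using nf_bound by fastforce
qed simp

lemma nf_coeff_zero: "nf_coeff n t 0 = 0"
  unfolding nf_coeff_def by simp

lemma nf_coeff_add: "nf_coeff n t (p + q) = nf_coeff n t p + nf_coeff n t q"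
  unfolding nf_coeff_def by (simp add: lookup_add sum.distrib)

lemma nf_coeff_diff: "nf_coeff n t (p - q) = nf_coeff n t p - nf_coeff n t q"
  unfolding nf_coeff_def by (simp add: lookup_minus sum_subtractf)

lemma nf_coeff_single:
  "nf_coeff n t (Poly_Mapping.single (i, j) c) = (if nf n i j = Some t then c else 0)"
  unfolding nf_coeff_def lookup_single
  using finite_nf_fibre[of n t] by (simp add: when_def)

lemma nf_coeff_mon: "nf_coeff n t (mon i j :: 'k::field poly2) = (if nf n i j = Some t then 1 else 0)"
  unfolding mon_def by (rule nf_coeff_single)

lemma nf_coeff_idealA:
  fixes p :: "'k::field poly2"
  assumes "n \<ge> 2" "p \<in> idealA n"
  shows "nf_coeff n t p = 0"
proof -
  obtain a b c where p: "p = a * mon 0 (2*n+3) + b * (mon n 2 - mon 0 (n+2)) + c * (mon (2*n+1) 0 - mon 1 (n+1))"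
    using assms(2) unfolding idealA_def by blast
  have y2n3: "nf_coeff n t (Poly_Mapping.single m d * mon 0 (2*n+3)) = 0"
    for m and d :: 'k
    using nf_y2n3[of n "snd m + (2*n+3)" "fst m"]
    by (cases m) (simp add: mon_def mult_single nf_coeff_single)
  have xn_y2: "nf_coeff n t (Poly_Mapping.single m d * (mon n 2 - mon 0 (n+2))) = 0"
    for m and d :: 'k
    using nf_xn_y2[OF assms(1), of "fst m + n" "snd m + 2"]
    by (cases m) (simp add: mon_def mult_single right_diff_distrib nf_coeff_diff nf_coeff_single add_ac)
  have x2n1: "nf_coeff n t (Poly_Mapping.single m d * (mon (2*n+1) 0 - mon 1 (n+1))) = 0"
    for m and d :: 'k
    using nf_x2n1[OF assms(1), of "fst m + (2*n+1)" "snd m"]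
    by (cases m) (simp add: mon_def mult_single right_diff_distrib nf_coeff_diff nf_coeff_single add_ac)
  show ?thesis
    unfolding p nf_coeff_add
    using additive_vanishes_on_multiples[of "nf_coeff n t", OF nf_coeff_add y2n3]
      additive_vanishes_on_multiples[of "nf_coeff n t", OF nf_coeff_add xn_y2]
      additive_vanishes_on_multiples[of "nf_coeff n t", OF nf_coeff_add x2n1]
    by simp
qed

lemma eqA_imp_nf_coeff_eq: "n \<ge> 2 \<Longrightarrow> eqA n p q \<Longrightarrow> nf_coeff n t p = nf_coeff n t q"
  using nf_coeff_idealA[of n "p - q" t] unfolding eqA_def by (simp add: nf_coeff_diff)

lemma mon_eqA_inB_iff:
  assumes "n \<ge> 2" "inB n a b"
  shows "eqA n (mon i j :: 'k::field poly2) (mon a b) \<longleftrightarrow> nf n i j = Some (a, b)"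
proof
  assume "eqA n (mon i j :: 'k poly2) (mon a b)"
  then have "nf_coeff n (a, b) (mon i j :: 'k poly2) = nf_coeff n (a, b) (mon a b :: 'k poly2)"
    by (rule eqA_imp_nf_coeff_eq[OF assms(1)])
  then show "nf n i j = Some (a, b)"
    using assms(2) by (simp add: nf_coeff_mon nf_inB split: if_splits)
qed (use assms(1) mon_eqA_nf in blast)

lemma mon_eqA_zero_iff:
  assumes "n \<ge> 2"
  shows "eqA n (mon i j :: 'k::field poly2) 0 \<longleftrightarrow> zero_div n i j"
proof
  assume zero: "eqA n (mon i j :: 'k poly2) 0"
  show "zero_div n i j"
  proof (rule ccontr)
    assume "\<not> zero_div n i j"
    then obtain t where "nf n i j = Some t"
      using nf_eq_None_iff by fastforce
    then have "nf_coeff n t (mon i j :: 'k poly2) = 1"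
      by (simp add: nf_coeff_mon)
    moreover have "nf_coeff n t (mon i j :: 'k poly2) = 0"
      using eqA_imp_nf_coeff_eq[OF assms zero] by (simp add: nf_coeff_zero)
    ultimately show False
      by simp
  qed
qed (use assms mon_eqA_zero_if_zero_div in blast)

text \<open>Item (k) is relation (k) of the statement.\<close>
lemma relations_memI:
  "{(0, n+2), (n, 2)} \<in> relations n"
  "1 \<le> k \<Longrightarrow> k \<le> n - 2 \<Longrightarrow> {(0, n+k+2), (n, k+2)} \<in> relations n"
  "{(0, 2*n+1), (n, n+1), (3*n, 0)} \<in> relations n"
  "{(0, 2*n+2), (n, n+2), (2*n, 2), (3*n, 1)} \<in> relations n"
  "1 \<le> k \<Longrightarrow> k \<le> n - 1 \<Longrightarrow> {(k, n+2), (n+k, 2), (2*n+k, 1)} \<in> relations n"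
  "{(1, n+1), (2*n+1, 0)} \<in> relations n"
  "2 \<le> k \<Longrightarrow> k \<le> n - 1 \<Longrightarrow> {(k, n+1), (2*n+k, 0)} \<in> relations n"
  unfolding relations_def by (intro UnI1 UnI2 singletonI CollectI exI conjI refl; (assumption | simp))+

lemma column_in_common_relation:
  assumes "2 \<le> j" "j \<le> n + 2"
  shows "\<exists>R\<in>relations n. (n, j) \<in> R \<and> (0, n + j) \<in> R"
proof -
  consider "j = 2" | "3 \<le> j" "j \<le> n" | "j = n + 1" | "j = n + 2"
    using assms by linarith
  then show ?thesis
  proof cases
    case 1
    then show ?thesis by (intro bexI[OF _ relations_memI(1)]) auto
  next
    case 2
    then show ?thesis by (intro bexI[OF _ relations_memI(2)[of "j - 2"]]) auto
  next
    case 3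
    then show ?thesis by (intro bexI[OF _ relations_memI(3)]) auto
  next
    case 4
    then show ?thesis by (intro bexI[OF _ relations_memI(4)]) auto
  qed
qed

lemma row_in_common_relation:
  assumes "n \<ge> 2" "n < i" "j \<le> 2" "\<not> inB n i j" "nf n i j = Some t"
  shows "\<exists>R\<in>relations n. (i, j) \<in> R \<and> t \<in> R"
proof -
  have "\<not> zero_div n i j"
    using assms(5) by (simp flip: nf_eq_None_iff)
  then have nf_ij: "t = (if j = 2 then (if i < 2*n then (i - n, n + 2) else (0, 2*n + 2))
                         else if i < 3*n then (i - 2*n, j + n + 1) else (0, j + 2*n + 1))"
    using assms by (auto simp: nf_def)
  consider "j = 2" "n < i" "i < 2*n" | "j = 2" "i = 2*n" | "j \<le> 1" "2*n < i" "i \<le> 3*n"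
    using assms(1-4) \<open>\<not> zero_div n i j\<close> unfolding inB_def zero_div_def by linarith
  then show ?thesis
  proof cases
    case 1
    with nf_ij show ?thesis by (intro bexI[OF _ relations_memI(5)[of "i - n"]]) auto
  next
    case 2
    with nf_ij show ?thesis by (intro bexI[OF _ relations_memI(4)]) auto
  next
    case 3
    consider "j = 1" "2*n < i" "i < 3*n" | "j = 1" "i = 3*n" | "j = 0" "i = 2*n + 1" "i < 3*n"
      | "j = 0" "2*n + 1 < i" "i < 3*n" | "j = 0" "i = 3*n"
      using 3 assms(1) by linarith
    then show ?thesis
    proof cases
      case 1
      with nf_ij show ?thesis by (intro bexI[OF _ relations_memI(5)[of "i - 2*n"]]) auto
    next
      case 2
      with nf_ij show ?thesis by (intro bexI[OF _ relations_memI(4)]) auto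
    next
      case 3
      with nf_ij show ?thesis by (intro bexI[OF _ relations_memI(6)]) auto
    next
      case 4
      with nf_ij show ?thesis by (intro bexI[OF _ relations_memI(7)[of "i - 2*n"]]) auto
    next
      case 5
      with nf_ij show ?thesis by (intro bexI[OF _ relations_memI(3)]) auto
    qed
  qed
qed

lemma nf_in_common_relation:
  assumes "n \<ge> 2" "\<not> inB n i j" "nf n i j = Some t"
  shows "\<exists>R\<in>relations n. (i, j) \<in> R \<and> t \<in> R"
proof -
  have "\<not> zero_div n i j"
    using assms(3) by (simp flip: nf_eq_None_iff)
  then consider "i = n" "2 \<le> j" "j \<le> n + 2" | "n < i" "j \<le> 2"
    using assms(1,2) unfolding inB_def zero_div_def by linarith
  then show ?thesis
  proof cases
    case 1
    moreover have "t = (0, n + j)"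
      using 1 assms \<open>\<not> zero_div n i j\<close> by (simp add: nf_def)
    ultimately show ?thesis
      using column_in_common_relation by blast
  next
    case 2
    then show ?thesis
      using assms row_in_common_relation by blast
  qed
qed

theorem corollary2p5:
  fixes n :: nat
  assumes "n \<ge> 2"
  shows "\<forall>i j.
    (let P1 = eqA n (mon i j :: 'k::field poly2) 0;
         P2 = inB n i j;
         P3 = (\<not> inB n i j \<and>
               (\<exists>!p. inB n (fst p) (snd p) \<and> eqA n (mon i j :: 'k poly2) (mon (fst p) (snd p))) \<and>
               (\<forall>i' j'. inB n i' j' \<and> eqA n (mon i j :: 'k poly2) (mon i' j') \<longrightarrow>
                   (\<exists>R\<in>relations n. (i, j) \<in> R \<and> (i', j') \<in> R)))
     in ((P1 \<and> \<not> P2 \<and> \<not> P3) \<or> (\<not> P1 \<and> P2 \<and> \<not> P3) \<or> (\<not> P1 \<and> \<not> P2 \<and> P3))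
        \<and> (P1 \<longleftrightarrow> zero_div n i j))"
proof -
  have zero: "eqA n (mon i j :: 'k poly2) 0 \<longleftrightarrow> zero_div n i j" for i j
    using assms by (rule mon_eqA_zero_iff)
  have B_nonzero: "inB n i j \<Longrightarrow> \<not> zero_div n i j" for i j
    unfolding inB_def zero_div_def by auto
  have representative: "inB n (fst p) (snd p) \<and> eqA n (mon i j :: 'k poly2) (mon (fst p) (snd p))
      \<longleftrightarrow> nf n i j = Some p" for i j p
    using mon_eqA_inB_iff[OF assms, of "fst p" "snd p" i j] inB_nf[OF assms, of i j "fst p" "snd p"]
    by auto
  have unique: "(\<exists>!p. nf n i j = Some p) \<longleftrightarrow> \<not> zero_div n i j" for i j
    by (cases "nf n i j") (auto simp flip: nf_eq_None_iff)
  have relation: "\<forall>i' j'. inB n i' j' \<and> eqA n (mon i j :: 'k poly2) (mon i' j') \<longrightarrow>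
      (\<exists>R\<in>relations n. (i, j) \<in> R \<and> (i', j') \<in> R)" if "\<not> inB n i j" for i j
    using that representative[of "(i', j')" i j for i' j'] nf_in_common_relation[OF assms, of i j]
    by simp
  show ?thesis
    unfolding Let_def representative unique zero
    using B_nonzero relation by (metis (full_types))
qed

end
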